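(* Let $F\subset\mathrm{Sym}^2(\mathbb{R}^n)$ be a cone subequation and $p\ge1$. Then the Riesz kernel $K_p$ is $F$-harmonic on $\mathbb{R}^n\setminus\{0\}$ if and only if $P_{e^\perp}-(p-1)P_e\in\partial F$ for every unit vector $e\in\mathbb{R}^n$.
   Context: A cone subequation is a closed $F\subset\mathrm{Sym}^2(\mathbb{R}^n)$ with $A\in F,P\ge0\Rightarrow A+P\in F$ and $tF=F$ for $t>0$; $\tilde F=\{A:-A\notin\mathrm{Int}F\}$. $F$-harmonic on an open set: finite, continuous, $F$-subharmonic and $-u$ is $\tilde F$-subharmonic, where $G$-subharmonic means upper semicontinuous with $D^2\phi(y)\in G$ for every $C^2$ test function $\phi$ at $y$ ($u\le\phi$ near $y$, equality at $y$). $P_e,P_{e^\perp}$ are orthogonal projections onto $\mathbb{R}e$ and $e^\perp$; $\partial F$ is the topological boundary of $F$. The Riesz kernel is $K_p(x)=-\frac{1}{p-2}|x|^{2-p}$ for $p\neq2$ and $K_2(x)=\log|x|$. *)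

theory Defs
  imports "HOL-Analysis.Analysis"
begin

definition Sym :: "(real^'n^'n) set" where
  "Sym = {A. transpose A = A}"

definition psd :: "real^'n^'n \<Rightarrow> bool" where
  "psd P \<longleftrightarrow> P \<in> Sym \<and> (\<forall>x. 0 \<le> x \<bullet> (P *v x))"

definition cone_subequation :: "(real^'n^'n) set \<Rightarrow> bool" where
  "cone_subequation F \<longleftrightarrow> F \<subseteq> Sym \<and> closed F
     \<and> (\<forall>A\<in>F. \<forall>P. psd P \<longrightarrow> A + P \<in> F)
     \<and> (\<forall>t::real. t > 0 \<longrightarrow> (\<lambda>A. t *\<^sub>R A) ` F = F)"

definition dual_subeq :: "(real^'n^'n) set \<Rightarrow> (real^'n^'n) set" where
  "dual_subeq F = {A \<in> Sym. - A \<notin> (top_of_set Sym) interior_of F}"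

definition C2_test_at :: "(real^'n \<Rightarrow> real) \<Rightarrow> real^'n \<Rightarrow> real^'n^'n \<Rightarrow> bool" where
  "C2_test_at phi y H \<longleftrightarrow> (\<exists>r>0. \<exists>g Hf.
      (\<forall>x\<in>ball y r. (phi has_derivative (\<lambda>h. g x \<bullet> h)) (at x)
                   \<and> (g has_derivative (\<lambda>h. Hf x *v h)) (at x))
      \<and> continuous_on (ball y r) Hf \<and> H = Hf y)"

definition usc_on :: "(real^'n) set \<Rightarrow> (real^'n \<Rightarrow> real) \<Rightarrow> bool" where
  "usc_on X u \<longleftrightarrow> (\<forall>y\<in>X. \<forall>c. u y < c \<longrightarrow> eventually (\<lambda>x. u x < c) (at y within X))"

definition subharmonic_on ::
  "(real^'n^'n) set \<Rightarrow> (real^'n) set \<Rightarrow> (real^'n \<Rightarrow> real) \<Rightarrow> bool" where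
  "subharmonic_on G X u \<longleftrightarrow> usc_on X u \<and>
     (\<forall>y\<in>X. \<forall>phi H. C2_test_at phi y H
        \<and> (\<exists>r>0. \<forall>x\<in>ball y r \<inter> X. u x \<le> phi x) \<and> u y = phi y
        \<longrightarrow> H \<in> G)"

definition harmonic_on ::
  "(real^'n^'n) set \<Rightarrow> (real^'n) set \<Rightarrow> (real^'n \<Rightarrow> real) \<Rightarrow> bool" where
  "harmonic_on F X u \<longleftrightarrow> continuous_on X u \<and> subharmonic_on F X u
     \<and> subharmonic_on (dual_subeq F) X (\<lambda>x. - u x)"

definition riesz_kernel :: "real \<Rightarrow> real^'n \<Rightarrow> real" where
  "riesz_kernel p x = (if p = 2 then ln (norm x) else - (1 / (p - 2)) * norm x powr (2 - p))"

text \<open>Orthogonal projection onto the line R e (e a unit vector), and onto e-perp.\<close>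
definition proj_line :: "real^'n \<Rightarrow> real^'n^'n" where
  "proj_line e = (\<chi> i j. e$i * e$j)"

definition proj_perp :: "real^'n \<Rightarrow> real^'n^'n" where
  "proj_perp e = mat 1 - proj_line e"

end

theory Submission
  imports Defs
begin

text \<open>
  Away from the origin K_p is smooth with Hessian |y|^{-p} (P_{e\<bottom>} - (p - 1) P_e), e = y / |y|.
  For a C^2 function u, F-harmonicity reduces to a pointwise condition on D^2 u: u is a test
  function for itself, which forces D^2 u(y) \<in> F and D^2 u(y) \<notin> Int F; conversely any test
  function touching u from above has Hessian \<ge> D^2 u(y), and positivity of F (and of its dual)
  carries membership over. So K_p is F-harmonic iff all its Hessians lie in \<partial>F, and since F is a
  cone, the positive factor |y|^{-p} can be dropped, leaving the unit-vector condition.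
\<close>

section \<open>Second derivatives on balls\<close>

definition has_grad_hess_on ::
  "(real^'n \<Rightarrow> real) \<Rightarrow> (real^'n \<Rightarrow> real^'n) \<Rightarrow> (real^'n \<Rightarrow> real^'n^'n) \<Rightarrow> (real^'n) set \<Rightarrow> bool"
  where "has_grad_hess_on f g Hf S \<longleftrightarrow>
    (\<forall>x\<in>S. (f has_derivative (\<lambda>h. g x \<bullet> h)) (at x) \<and> (g has_derivative (\<lambda>h. Hf x *v h)) (at x))"

lemma C2_test_at_iff:
  "C2_test_at f y H \<longleftrightarrow>
     (\<exists>r>0. \<exists>g Hf. has_grad_hess_on f g Hf (ball y r) \<and> continuous_on (ball y r) Hf \<and> H = Hf y)"
  unfolding C2_test_at_def has_grad_hess_on_def by blast

lemma has_grad_hess_on_subset: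
  "has_grad_hess_on f g Hf S \<Longrightarrow> T \<subseteq> S \<Longrightarrow> has_grad_hess_on f g Hf T"
  unfolding has_grad_hess_on_def by blast

lemma has_real_derivative_along_line:
  fixes f :: "'a::real_normed_vector \<Rightarrow> real"
  assumes "(f has_derivative f') (at (x + s *\<^sub>R a))"
  shows "((\<lambda>s. f (x + s *\<^sub>R a)) has_real_derivative f' a) (at s)"
proof -
  have "((\<lambda>s. x + s *\<^sub>R a) has_derivative (\<lambda>h. h *\<^sub>R a)) (at s)"
    by (auto intro!: derivative_eq_intros)
  from has_derivative_compose[OF this assms]
  have "((\<lambda>s. f (x + s *\<^sub>R a)) has_derivative (\<lambda>h. f' (h *\<^sub>R a))) (at s)" .
  moreover have "(\<lambda>h. f' (h *\<^sub>R a)) = (*) (f' a)"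
    using linear_cmul[OF has_derivative_linear[OF assms]] by (auto simp: fun_eq_iff)
  ultimately show ?thesis unfolding has_field_derivative_def by simp
qed

lemma second_difference_mean_value:
  assumes D: "has_grad_hess_on f g Hf S" and s: "s > 0" and t: "t > 0"
    and R: "\<And>\<sigma> \<tau>. 0 \<le> \<sigma> \<Longrightarrow> \<sigma> \<le> s \<Longrightarrow> 0 \<le> \<tau> \<Longrightarrow> \<tau> \<le> t \<Longrightarrow> x + \<sigma> *\<^sub>R a + \<tau> *\<^sub>R b \<in> S"
  obtains \<sigma> \<tau> where "0 < \<sigma>" "\<sigma> < s" "0 < \<tau>" "\<tau> < t"
    "f (x + s *\<^sub>R a + t *\<^sub>R b) - f (x + s *\<^sub>R a) - f (x + t *\<^sub>R b) + f x
       = s * t * ((Hf (x + \<sigma> *\<^sub>R a + \<tau> *\<^sub>R b) *v b) \<bullet> a)"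
proof -
  define k where "k \<sigma> = f ((x + t *\<^sub>R b) + \<sigma> *\<^sub>R a) - f (x + \<sigma> *\<^sub>R a)" for \<sigma>
  have "(k has_real_derivative g ((x + t *\<^sub>R b) + \<sigma> *\<^sub>R a) \<bullet> a - g (x + \<sigma> *\<^sub>R a) \<bullet> a) (at \<sigma>)"
    if "0 \<le> \<sigma>" "\<sigma> \<le> s" for \<sigma>
  proof -
    have "(x + t *\<^sub>R b) + \<sigma> *\<^sub>R a \<in> S" "x + \<sigma> *\<^sub>R a \<in> S"
      using R[OF that _ order_refl] R[OF that order_refl] t by (auto simp: algebra_simps)
    then show ?thesis
      unfolding k_def using D by (intro DERIV_diff has_real_derivative_along_line) (auto simp: has_grad_hess_on_def)
  qed
  from MVT2[OF s this] obtain \<sigma> where \<sigma>: "0 < \<sigma>" "\<sigma> < s"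
    "k s - k 0 = s * (g ((x + t *\<^sub>R b) + \<sigma> *\<^sub>R a) \<bullet> a - g (x + \<sigma> *\<^sub>R a) \<bullet> a)"
    by auto
  define m where "m \<tau> = g ((x + \<sigma> *\<^sub>R a) + \<tau> *\<^sub>R b) \<bullet> a" for \<tau>
  have "(m has_real_derivative (Hf ((x + \<sigma> *\<^sub>R a) + \<tau> *\<^sub>R b) *v b) \<bullet> a) (at \<tau>)"
    if "0 \<le> \<tau>" "\<tau> \<le> t" for \<tau>
  proof -
    have "(x + \<sigma> *\<^sub>R a) + \<tau> *\<^sub>R b \<in> S" using R[OF _ _ that, of \<sigma>] \<sigma> by simp
    then have "((\<lambda>z. g z \<bullet> a) has_derivative (\<lambda>h. (Hf ((x + \<sigma> *\<^sub>R a) + \<tau> *\<^sub>R b) *v h) \<bullet> a))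
        (at ((x + \<sigma> *\<^sub>R a) + \<tau> *\<^sub>R b))"
      using D by (auto simp: has_grad_hess_on_def intro!: derivative_eq_intros)
    then show ?thesis unfolding m_def by (rule has_real_derivative_along_line)
  qed
  from MVT2[OF t this] obtain \<tau> where \<tau>: "0 < \<tau>" "\<tau> < t"
    "m t - m 0 = t * ((Hf ((x + \<sigma> *\<^sub>R a) + \<tau> *\<^sub>R b) *v b) \<bullet> a)"
    by auto
  have "f (x + s *\<^sub>R a + t *\<^sub>R b) - f (x + s *\<^sub>R a) - f (x + t *\<^sub>R b) + f x = k s - k 0"
    unfolding k_def by (simp add: algebra_simps)
  also have "\<dots> = s * (m t - m 0)" using \<sigma>(3) unfolding m_def by (simp add: algebra_simps)
  also have "\<dots> = s * t * ((Hf (x + \<sigma> *\<^sub>R a + \<tau> *\<^sub>R b) *v b) \<bullet> a)"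
    using \<tau>(3) by simp
  finally show ?thesis using that \<sigma> \<tau> by blast
qed

lemma small_parallelogram_in_ball:
  fixes a b :: "'a::real_normed_vector"
  assumes "\<epsilon> > 0"
  obtains t where "t > 0" "\<And>\<sigma> \<tau>. \<bar>\<sigma>\<bar> \<le> t \<Longrightarrow> \<bar>\<tau>\<bar> \<le> t \<Longrightarrow> y + \<sigma> *\<^sub>R a + \<tau> *\<^sub>R b \<in> ball y \<epsilon>"
proof
  define t where "t = \<epsilon> / (2 * (norm a + norm b + 1))"
  have n: "norm a + norm b + 1 > 0" by (smt (verit) norm_ge_zero)
  then show t: "t > 0" using assms by (simp add: t_def)
  fix \<sigma> \<tau> :: real assume "\<bar>\<sigma>\<bar> \<le> t" "\<bar>\<tau>\<bar> \<le> t"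
  then have "norm (\<sigma> *\<^sub>R a + \<tau> *\<^sub>R b) \<le> t * norm a + t * norm b"
    by (smt (verit) mult_right_mono norm_ge_zero norm_scaleR norm_triangle_ineq)
  also have "\<dots> < t * (2 * (norm a + norm b + 1))"
    using t by (simp add: algebra_simps) (smt (verit) mult_nonneg_nonneg norm_ge_zero)
  also have "\<dots> = \<epsilon>" using n by (simp add: t_def)
  finally show "y + \<sigma> *\<^sub>R a + \<tau> *\<^sub>R b \<in> ball y \<epsilon>"
    by (simp add: dist_norm minus_add_distrib[symmetric] del: minus_add_distrib)
qed

lemma eq_if_continuous_and_approx_eq:
  fixes c d :: "'a::metric_space \<Rightarrow> real"
  assumes "continuous_on S c" "continuous_on S d" "y \<in> S"
    and approx: "\<And>\<epsilon>. \<epsilon> > 0 \<Longrightarrow> \<exists>\<xi>1\<in>S \<inter> ball y \<epsilon>. \<exists>\<xi>2\<in>S \<inter> ball y \<epsilon>. c \<xi>1 = d \<xi>2"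
  shows "c y = d y"
proof (rule ccontr)
  assume ne: "c y \<noteq> d y"
  define e where "e = \<bar>c y - d y\<bar> / 2"
  have e: "e > 0" using ne by (simp add: e_def)
  obtain d1 where d1: "d1 > 0" "\<forall>x\<in>S. dist x y < d1 \<longrightarrow> dist (c x) (c y) < e"
    using assms(1,3) e unfolding continuous_on_iff by blast
  obtain d2 where d2: "d2 > 0" "\<forall>x\<in>S. dist x y < d2 \<longrightarrow> dist (d x) (d y) < e"
    using assms(2,3) e unfolding continuous_on_iff by blast
  obtain \<xi>1 \<xi>2 where \<xi>: "\<xi>1 \<in> S" "\<xi>2 \<in> S" "dist y \<xi>1 < min d1 d2" "dist y \<xi>2 < min d1 d2"
    "c \<xi>1 = d \<xi>2"
    using approx[of "min d1 d2"] d1 d2 by auto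
  have "\<bar>c \<xi>1 - c y\<bar> < e" "\<bar>d \<xi>2 - d y\<bar> < e"
    using d1 d2 \<xi> by (auto simp: dist_real_def dist_commute)
  then show False using \<xi>(5) by (simp add: e_def abs_if split: if_splits)
qed

lemma nonneg_if_continuous_and_approx_nonneg:
  fixes c :: "'a::metric_space \<Rightarrow> real"
  assumes "continuous_on S c" "y \<in> S"
    and approx: "\<And>\<epsilon>. \<epsilon> > 0 \<Longrightarrow> \<exists>\<xi>\<in>S \<inter> ball y \<epsilon>. c \<xi> \<ge> 0"
  shows "c y \<ge> 0"
proof (rule ccontr)
  assume neg: "\<not> c y \<ge> 0"
  obtain d where d: "d > 0" "\<forall>x\<in>S. dist x y < d \<longrightarrow> dist (c x) (c y) < - c y"
    using assms(1,2) neg unfolding continuous_on_iff by (meson neg_0_less_iff_less not_le)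
  obtain \<xi> where "\<xi> \<in> S" "dist y \<xi> < d" "c \<xi> \<ge> 0" using approx[OF d(1)] by auto
  then show False using d neg by (auto simp: dist_real_def dist_commute)
qed

lemma continuous_on_matrix_vector_mult [continuous_intros]:
  "continuous_on S M \<Longrightarrow> continuous_on S (\<lambda>x. (M x :: real^'n^'m) *v v)"
  by (intro bounded_linear.continuous_on[of "\<lambda>M. M *v v"] bounded_linearI')
     (auto simp: matrix_vector_mult_add_rdistrib scaleR_matrix_vector_assoc)

lemma hessian_symmetric:
  assumes D: "has_grad_hess_on f g Hf (ball y r)" and C: "continuous_on (ball y r) Hf" and "r > 0"
  shows "(Hf y *v b) \<bullet> a = (Hf y *v a) \<bullet> b"
proof (rule eq_if_continuous_and_approx_eq[where S = "ball y r"
    and c = "\<lambda>z. (Hf z *v b) \<bullet> a" and d = "\<lambda>z. (Hf z *v a) \<bullet> b"])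
  show "continuous_on (ball y r) (\<lambda>z. (Hf z *v b) \<bullet> a)" "continuous_on (ball y r) (\<lambda>z. (Hf z *v a) \<bullet> b)"
    using C by (auto intro!: continuous_intros)
  show "y \<in> ball y r" using \<open>r > 0\<close> by simp
  fix \<epsilon> :: real assume "\<epsilon> > 0"
  define \<rho> where "\<rho> = min \<epsilon> r"
  obtain t where t: "t > 0"
    and R: "\<And>\<sigma> \<tau>. \<bar>\<sigma>\<bar> \<le> t \<Longrightarrow> \<bar>\<tau>\<bar> \<le> t \<Longrightarrow> y + \<sigma> *\<^sub>R a + \<tau> *\<^sub>R b \<in> ball y \<rho>"
    using small_parallelogram_in_ball[where \<epsilon> = \<rho> and y = y and a = a and b = b] \<open>\<epsilon> > 0\<close> \<open>r > 0\<close>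
    unfolding \<rho>_def by auto
  have R': "y + \<tau> *\<^sub>R b + \<sigma> *\<^sub>R a \<in> ball y \<rho>" if "\<bar>\<sigma>\<bar> \<le> t" "\<bar>\<tau>\<bar> \<le> t" for \<sigma> \<tau>
    using R[OF that] by (simp add: algebra_simps)
  have D\<rho>: "has_grad_hess_on f g Hf (ball y \<rho>)"
    using D by (rule has_grad_hess_on_subset) (auto simp: \<rho>_def)
  obtain \<sigma>1 \<tau>1 where 1: "0 < \<sigma>1" "\<sigma>1 < t" "0 < \<tau>1" "\<tau>1 < t"
    "f (y + t *\<^sub>R a + t *\<^sub>R b) - f (y + t *\<^sub>R a) - f (y + t *\<^sub>R b) + f y
       = t * t * ((Hf (y + \<sigma>1 *\<^sub>R a + \<tau>1 *\<^sub>R b) *v b) \<bullet> a)"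
    using second_difference_mean_value[OF D\<rho> t t, of y a b] R by auto
  obtain \<sigma>2 \<tau>2 where 2: "0 < \<sigma>2" "\<sigma>2 < t" "0 < \<tau>2" "\<tau>2 < t"
    "f (y + t *\<^sub>R b + t *\<^sub>R a) - f (y + t *\<^sub>R b) - f (y + t *\<^sub>R a) + f y
       = t * t * ((Hf (y + \<sigma>2 *\<^sub>R b + \<tau>2 *\<^sub>R a) *v a) \<bullet> b)"
    using second_difference_mean_value[OF D\<rho> t t, of y b a] R' by auto
  have "f (y + t *\<^sub>R b + t *\<^sub>R a) = f (y + t *\<^sub>R a + t *\<^sub>R b)" by (simp add: algebra_simps)
  then have "t * t * ((Hf (y + \<sigma>1 *\<^sub>R a + \<tau>1 *\<^sub>R b) *v b) \<bullet> a)
      = t * t * ((Hf (y + \<sigma>2 *\<^sub>R b + \<tau>2 *\<^sub>R a) *v a) \<bullet> b)"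
    using 1(5) 2(5) by linarith
  then have "(Hf (y + \<sigma>1 *\<^sub>R a + \<tau>1 *\<^sub>R b) *v b) \<bullet> a = (Hf (y + \<sigma>2 *\<^sub>R b + \<tau>2 *\<^sub>R a) *v a) \<bullet> b"
    using t by simp
  moreover have "y + \<sigma>1 *\<^sub>R a + \<tau>1 *\<^sub>R b \<in> ball y r \<inter> ball y \<epsilon>"
    "y + \<sigma>2 *\<^sub>R b + \<tau>2 *\<^sub>R a \<in> ball y r \<inter> ball y \<epsilon>"
    using R[of \<sigma>1 \<tau>1] R'[of \<tau>2 \<sigma>2] 1 2 by (auto simp: \<rho>_def)
  ultimately show "\<exists>\<xi>1\<in>ball y r \<inter> ball y \<epsilon>. \<exists>\<xi>2\<in>ball y r \<inter> ball y \<epsilon>.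
      (Hf \<xi>1 *v b) \<bullet> a = (Hf \<xi>2 *v a) \<bullet> b"
    by blast
qed

lemma hessian_psd_at_local_min:
  assumes D: "has_grad_hess_on f g Hf (ball y r)" and C: "continuous_on (ball y r) Hf" and "r > 0"
    and min: "\<And>x. x \<in> ball y r \<Longrightarrow> f y \<le> f x"
  shows "0 \<le> v \<bullet> (Hf y *v v)"
proof -
  have "0 \<le> (Hf y *v v) \<bullet> v"
  proof (rule nonneg_if_continuous_and_approx_nonneg[where S = "ball y r" and c = "\<lambda>z. (Hf z *v v) \<bullet> v"])
    show "continuous_on (ball y r) (\<lambda>z. (Hf z *v v) \<bullet> v)"
      using C by (auto intro!: continuous_intros)
    show "y \<in> ball y r" using \<open>r > 0\<close> by simp
    fix \<epsilon> :: real assume "\<epsilon> > 0"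
    define \<rho> where "\<rho> = min \<epsilon> r"
    obtain t where t: "t > 0"
      and R: "\<And>\<sigma> \<tau>. \<bar>\<sigma>\<bar> \<le> t \<Longrightarrow> \<bar>\<tau>\<bar> \<le> t \<Longrightarrow> y + \<sigma> *\<^sub>R v + \<tau> *\<^sub>R v \<in> ball y \<rho>"
      using small_parallelogram_in_ball[where \<epsilon> = \<rho> and y = y and a = v and b = v] \<open>\<epsilon> > 0\<close> \<open>r > 0\<close>
      unfolding \<rho>_def by auto
    \<comment> \<open>second difference centred at y: f(y + tv) - 2 f(y) + f(y - tv) \<ge> 0\<close>
    define x where "x = y - t *\<^sub>R v"
    have x_shift: "x + \<sigma> *\<^sub>R v + \<tau> *\<^sub>R v = y + (\<sigma> - t) *\<^sub>R v + \<tau> *\<^sub>R v" for \<sigma> \<tau>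
      by (simp add: x_def algebra_simps)
    have Rx: "x + \<sigma> *\<^sub>R v + \<tau> *\<^sub>R v \<in> ball y \<rho>" if "0 \<le> \<sigma>" "\<sigma> \<le> t" "0 \<le> \<tau>" "\<tau> \<le> t" for \<sigma> \<tau>
      unfolding x_shift using that by (intro R) auto
    have D\<rho>: "has_grad_hess_on f g Hf (ball y \<rho>)"
      using D by (rule has_grad_hess_on_subset) (auto simp: \<rho>_def)
    obtain \<sigma> \<tau> where mv: "0 < \<sigma>" "\<sigma> < t" "0 < \<tau>" "\<tau> < t"
      "f (x + t *\<^sub>R v + t *\<^sub>R v) - f (x + t *\<^sub>R v) - f (x + t *\<^sub>R v) + f x
         = t * t * ((Hf (x + \<sigma> *\<^sub>R v + \<tau> *\<^sub>R v) *v v) \<bullet> v)"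
      using second_difference_mean_value[OF D\<rho> t t, of x v v] Rx by auto
    have "ball y \<rho> \<subseteq> ball y r \<inter> ball y \<epsilon>" by (auto simp: \<rho>_def)
    then have "f y \<le> f (x + t *\<^sub>R v + t *\<^sub>R v)" "f y \<le> f (x + 0 *\<^sub>R v + 0 *\<^sub>R v)"
      using min Rx[of t t] Rx[of 0 0] t by auto
    moreover have "x + t *\<^sub>R v = y" by (simp add: x_def)
    ultimately have "0 \<le> t * t * ((Hf (x + \<sigma> *\<^sub>R v + \<tau> *\<^sub>R v) *v v) \<bullet> v)"
      using mv(5) by simp
    then have "0 \<le> (Hf (x + \<sigma> *\<^sub>R v + \<tau> *\<^sub>R v) *v v) \<bullet> v"
      using mult_pos_pos[OF t t] by (simp add: zero_le_mult_iff)
    then show "\<exists>\<xi>\<in>ball y r \<inter> ball y \<epsilon>. 0 \<le> (Hf \<xi> *v v) \<bullet> v"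
      using Rx[of \<sigma> \<tau>] mv \<open>ball y \<rho> \<subseteq> _\<close> by (meson less_imp_le subsetD)
  qed
  then show ?thesis by (simp add: inner_commute)
qed

lemma C2_test_at_Sym:
  assumes "C2_test_at f y H"
  shows "H \<in> Sym"
proof -
  obtain r g Hf where r: "r > 0" and D: "has_grad_hess_on f g Hf (ball y r)"
    and C: "continuous_on (ball y r) Hf" and H: "H = Hf y"
    using assms unfolding C2_test_at_iff by blast
  have "Hf y $ i $ j = Hf y $ j $ i" for i j
    using hessian_symmetric[OF D C r, of "axis j 1" "axis i 1"]
    by (simp add: matrix_vector_mult_basis inner_axis column_def)
  then show ?thesis by (simp add: H Sym_def vec_eq_iff transpose_def)
qed

lemma C2_test_at_psd_if_local_min:
  assumes "C2_test_at f y H" and "\<exists>r>0. \<forall>x\<in>ball y r. f y \<le> f x"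
  shows "psd H"
proof -
  obtain r g Hf where r: "r > 0" and D: "has_grad_hess_on f g Hf (ball y r)"
    and C: "continuous_on (ball y r) Hf" and H: "H = Hf y"
    using assms(1) unfolding C2_test_at_iff by blast
  obtain r' where r': "r' > 0" "\<forall>x\<in>ball y r'. f y \<le> f x" using assms(2) by blast
  define \<rho> where "\<rho> = min r r'"
  have "0 \<le> v \<bullet> (H *v v)" for v
    unfolding H
  proof (rule hessian_psd_at_local_min)
    show "has_grad_hess_on f g Hf (ball y \<rho>)"
      using D by (rule has_grad_hess_on_subset) (auto simp: \<rho>_def)
    show "continuous_on (ball y \<rho>) Hf"
      using C by (rule continuous_on_subset) (auto simp: \<rho>_def)
  qed (use r r' in \<open>auto simp: \<rho>_def\<close>)
  then show ?thesis using C2_test_at_Sym[OF assms(1)] by (simp add: psd_def)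
qed

lemma C2_test_at_diff:
  assumes "C2_test_at f y H" and "C2_test_at w y Hw"
  shows "C2_test_at (\<lambda>x. f x - w x) y (H - Hw)"
proof -
  obtain r g Hf where r: "r > 0" and D: "has_grad_hess_on f g Hf (ball y r)"
    and C: "continuous_on (ball y r) Hf" and H: "H = Hf y"
    using assms(1) unfolding C2_test_at_iff by blast
  obtain r' gw Hfw where r': "r' > 0" and Dw: "has_grad_hess_on w gw Hfw (ball y r')"
    and Cw: "continuous_on (ball y r') Hfw" and Hw: "Hw = Hfw y"
    using assms(2) unfolding C2_test_at_iff by blast
  define \<rho> where "\<rho> = min r r'"
  have "has_grad_hess_on (\<lambda>x. f x - w x) (\<lambda>x. g x - gw x) (\<lambda>x. Hf x - Hfw x) (ball y \<rho>)"
    using D Dw unfolding has_grad_hess_on_def \<rho>_def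
    by (auto intro!: derivative_eq_intros simp: inner_diff_left matrix_vector_mult_diff_rdistrib)
  moreover have "continuous_on (ball y \<rho>) (\<lambda>x. Hf x - Hfw x)"
    using C Cw by (intro continuous_on_diff) (auto simp: \<rho>_def intro: continuous_on_subset)
  moreover have "\<rho> > 0" using r r' by (simp add: \<rho>_def)
  ultimately show ?thesis
    unfolding C2_test_at_iff H Hw by blast
qed

lemma C2_test_at_uminus:
  assumes "C2_test_at f y H"
  shows "C2_test_at (\<lambda>x. - f x) y (- H)"
proof -
  have "has_grad_hess_on (\<lambda>x. 0) (\<lambda>x. 0) (\<lambda>x. 0) (ball y 1)"
    by (simp add: has_grad_hess_on_def)
  then have "C2_test_at (\<lambda>x. 0) y 0"
    unfolding C2_test_at_iff using zero_less_one continuous_on_const by blast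
  from C2_test_at_diff[OF this assms] show ?thesis by simp
qed

lemma C2_test_at_imp_isCont: "C2_test_at f y H \<Longrightarrow> isCont f y"
  unfolding C2_test_at_iff has_grad_hess_on_def
  by (meson centre_in_ball differentiable_imp_continuous_within differentiableI)

lemma C2_test_at_touching_from_above:
  assumes "C2_test_at w y Hw" and "C2_test_at \<phi> y H" and "open X" "y \<in> X"
    and "\<exists>r>0. \<forall>x\<in>ball y r \<inter> X. w x \<le> \<phi> x" and "w y = \<phi> y"
  shows "psd (H - Hw)"
proof (rule C2_test_at_psd_if_local_min)
  show "C2_test_at (\<lambda>x. \<phi> x - w x) y (H - Hw)"
    using assms(2,1) by (rule C2_test_at_diff)
  obtain r where r: "r > 0" "\<forall>x\<in>ball y r \<inter> X. w x \<le> \<phi> x" using assms(5) by blast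
  obtain r' where r': "r' > 0" "ball y r' \<subseteq> X" using assms(3,4) open_contains_ball by blast
  show "\<exists>\<rho>>0. \<forall>x\<in>ball y \<rho>. \<phi> y - w y \<le> \<phi> x - w x"
    using r r' assms(6) by (intro exI[of _ "min r r'"]) auto
qed

section \<open>Cone subequations\<close>

lemma homeomorphic_map_Sym_affine:
  assumes "t \<noteq> 0" and "P \<in> Sym"
  shows "homeomorphic_map (top_of_set Sym) (top_of_set Sym) (\<lambda>A. t *\<^sub>R A + P)"
  unfolding homeomorphic_map_maps homeomorphic_maps_def
  using assms
  by (intro exI[of _ "\<lambda>A. (1 / t) *\<^sub>R (A - P)"])
     (auto intro!: continuous_intros simp: Sym_def vec_eq_iff transpose_def)

lemma homeomorphic_map_interior_of_subset:
  assumes "homeomorphic_map X X f" and "S \<subseteq> topspace X" and "f ` S \<subseteq> S"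
  shows "f ` (X interior_of S) \<subseteq> X interior_of S"
  using homeomorphic_map_interior_of[OF assms(1,2)] interior_of_mono[OF assms(3)] by blast

lemma cone_subequation_scaleR_iff:
  assumes "cone_subequation F" and "t > 0"
  shows "t *\<^sub>R A \<in> F \<longleftrightarrow> A \<in> F"
proof
  have img: "(\<lambda>A. t *\<^sub>R A) ` F = F" using assms unfolding cone_subequation_def by blast
  show "A \<in> F \<Longrightarrow> t *\<^sub>R A \<in> F" using img by blast
  assume "t *\<^sub>R A \<in> F"
  then have "t *\<^sub>R A \<in> (\<lambda>A. t *\<^sub>R A) ` F" by (simp only: img)
  then obtain B where "B \<in> F" "t *\<^sub>R A = t *\<^sub>R B" by (rule imageE)
  then show "A \<in> F" using \<open>t > 0\<close> by simp
qed

lemma cone_subequation_interior_scaleR_iff: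
  assumes "cone_subequation F" and "t > 0"
  shows "t *\<^sub>R A \<in> top_of_set Sym interior_of F \<longleftrightarrow> A \<in> top_of_set Sym interior_of F"
proof -
  have "c *\<^sub>R B \<in> top_of_set Sym interior_of F" if "c > 0" "B \<in> top_of_set Sym interior_of F" for c B
  proof -
    have "homeomorphic_map (top_of_set Sym) (top_of_set Sym) (\<lambda>A. c *\<^sub>R A + 0)"
      using \<open>c > 0\<close> by (intro homeomorphic_map_Sym_affine) (auto simp: Sym_def transpose_def vec_eq_iff)
    moreover have "(\<lambda>A. c *\<^sub>R A + 0) ` F \<subseteq> F"
      using cone_subequation_scaleR_iff[OF assms(1) \<open>c > 0\<close>] by auto
    moreover have "F \<subseteq> topspace (top_of_set Sym)"
      using assms(1) by (simp add: cone_subequation_def)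
    ultimately show ?thesis
      using homeomorphic_map_interior_of_subset that(2) by (fastforce simp: image_subset_iff)
  qed
  from this[of t A] this[of "1 / t" "t *\<^sub>R A"] show ?thesis using \<open>t > 0\<close> by auto
qed

lemma cone_subequation_interior_add_psd:
  assumes "cone_subequation F" and "A \<in> top_of_set Sym interior_of F" and "psd P"
  shows "A + P \<in> top_of_set Sym interior_of F"
proof -
  have "homeomorphic_map (top_of_set Sym) (top_of_set Sym) (\<lambda>A. 1 *\<^sub>R A + P)"
    using \<open>psd P\<close> by (intro homeomorphic_map_Sym_affine) (auto simp: psd_def)
  moreover have "(\<lambda>A. 1 *\<^sub>R A + P) ` F \<subseteq> F"
    using assms(1,3) unfolding cone_subequation_def by auto
  moreover have "F \<subseteq> topspace (top_of_set Sym)"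
    using assms(1) by (simp add: cone_subequation_def)
  ultimately show ?thesis
    using homeomorphic_map_interior_of_subset assms(2) by (fastforce simp: image_subset_iff)
qed

lemma cone_subequation_frontier_iff:
  assumes "cone_subequation F"
  shows "A \<in> top_of_set Sym frontier_of F \<longleftrightarrow> A \<in> F \<and> A \<notin> top_of_set Sym interior_of F"
proof -
  have "closedin (top_of_set Sym) F"
    using assms unfolding cone_subequation_def by (intro closed_subset) auto
  then show ?thesis by (simp add: frontier_of_def closure_of_closedin)
qed

lemma cone_subequation_frontier_scaleR_iff:
  assumes "cone_subequation F" and "t > 0"
  shows "t *\<^sub>R A \<in> top_of_set Sym frontier_of F \<longleftrightarrow> A \<in> top_of_set Sym frontier_of F"
  using cone_subequation_frontier_iff[OF assms(1)] cone_subequation_scaleR_iff[OF assms]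
    cone_subequation_interior_scaleR_iff[OF assms] by simp

lemma dual_subeq_add_psd:
  assumes "cone_subequation F" and "A \<in> dual_subeq F" and "psd P"
  shows "A + P \<in> dual_subeq F"
proof -
  have "A + P \<in> Sym" using assms(2,3) by (auto simp: dual_subeq_def psd_def Sym_def transpose_def vec_eq_iff)
  moreover have "- (A + P) \<notin> top_of_set Sym interior_of F"
  proof
    assume "- (A + P) \<in> top_of_set Sym interior_of F"
    then have "- (A + P) + P \<in> top_of_set Sym interior_of F"
      using cone_subequation_interior_add_psd[OF assms(1) _ assms(3)] by blast
    then show False using assms(2) by (simp add: dual_subeq_def)
  qed
  ultimately show ?thesis by (simp add: dual_subeq_def)
qed

section \<open>Harmonicity of C^2 functions\<close>

lemma continuous_on_imp_usc_on: "continuous_on X u \<Longrightarrow> usc_on X u"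
  unfolding usc_on_def continuous_on_def by (auto intro: order_tendstoD(2))

lemma C2_imp_continuous_on:
  assumes "\<And>y. y \<in> X \<Longrightarrow> C2_test_at u y (D2u y)"
  shows "continuous_on X u"
  using assms C2_test_at_imp_isCont by (blast intro: continuous_at_imp_continuous_on)

lemma subharmonic_on_imp_hessian_mem:
  assumes "subharmonic_on G X u" and "y \<in> X" and "C2_test_at u y H"
  shows "H \<in> G"
  \<comment> \<open>u is a test function for itself at y\<close>
  using assms unfolding subharmonic_on_def by (blast intro: order_refl zero_less_one)

lemma subharmonic_on_if_hessian_mem:
  assumes pos: "\<And>A P. A \<in> G \<Longrightarrow> psd P \<Longrightarrow> A + P \<in> G" and "open X"
    and C2: "\<And>y. y \<in> X \<Longrightarrow> C2_test_at u y (D2u y)" and mem: "\<And>y. y \<in> X \<Longrightarrow> D2u y \<in> G"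
  shows "subharmonic_on G X u"
  unfolding subharmonic_on_def
proof (intro conjI ballI allI impI)
  show "usc_on X u" using C2 by (intro continuous_on_imp_usc_on C2_imp_continuous_on)
  fix y \<phi> H
  assume y: "y \<in> X"
    and touch: "C2_test_at \<phi> y H \<and> (\<exists>r>0. \<forall>x\<in>ball y r \<inter> X. u x \<le> \<phi> x) \<and> u y = \<phi> y"
  have "psd (H - D2u y)"
    using C2_test_at_touching_from_above[OF C2[OF y] _ \<open>open X\<close> y] touch by blast
  from pos[OF mem[OF y] this] show "H \<in> G" by simp
qed

lemma harmonic_on_iff_hessian_in_frontier:
  assumes F: "cone_subequation F" and "open X" and C2: "\<And>y. y \<in> X \<Longrightarrow> C2_test_at u y (D2u y)"
  shows "harmonic_on F X u \<longleftrightarrow> (\<forall>y\<in>X. D2u y \<in> top_of_set Sym frontier_of F)"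
proof -
  have C2_minus: "C2_test_at (\<lambda>x. - u x) y (- D2u y)" if "y \<in> X" for y
    using C2[OF that] by (rule C2_test_at_uminus)
  have "harmonic_on F X u \<longleftrightarrow> (\<forall>y\<in>X. D2u y \<in> F \<and> - D2u y \<in> dual_subeq F)"
  proof
    assume "harmonic_on F X u"
    then show "\<forall>y\<in>X. D2u y \<in> F \<and> - D2u y \<in> dual_subeq F"
      unfolding harmonic_on_def using C2 C2_minus subharmonic_on_imp_hessian_mem by blast
  next
    assume mem: "\<forall>y\<in>X. D2u y \<in> F \<and> - D2u y \<in> dual_subeq F"
    have "subharmonic_on F X u"
      using F C2 mem \<open>open X\<close> by (intro subharmonic_on_if_hessian_mem) (auto simp: cone_subequation_def)
    moreover have "subharmonic_on (dual_subeq F) X (\<lambda>x. - u x)"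
      using dual_subeq_add_psd[OF F] C2_minus mem \<open>open X\<close> by (intro subharmonic_on_if_hessian_mem) auto
    moreover have "continuous_on X u" using C2 by (rule C2_imp_continuous_on)
    ultimately show "harmonic_on F X u" by (simp add: harmonic_on_def)
  qed
  also have "\<dots> \<longleftrightarrow> (\<forall>y\<in>X. D2u y \<in> top_of_set Sym frontier_of F)"
    using C2_test_at_Sym[OF C2_minus] by (auto simp: cone_subequation_frontier_iff[OF F] dual_subeq_def)
  finally show ?thesis .
qed

section \<open>The Riesz kernel\<close>

definition riesz_grad :: "real \<Rightarrow> real^'n \<Rightarrow> real^'n" where
  "riesz_grad p x = (x \<bullet> x) powr (-p/2) *\<^sub>R x"

text \<open>Here proj_line x is the outer product x x^T, a projection only when x is a unit vector.\<close>

definition riesz_hess :: "real \<Rightarrow> real^'n \<Rightarrow> real^'n^'n" where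
  "riesz_hess p x = (x \<bullet> x) powr (-p/2) *\<^sub>R (mat 1 - (p / (x \<bullet> x)) *\<^sub>R proj_line x)"

lemma proj_line_mult_vector: "proj_line x *v h = (x \<bullet> h) *\<^sub>R x"
  by (simp add: proj_line_def vec_eq_iff matrix_vector_mult_def inner_vec_def sum_distrib_left
      sum_distrib_right mult_ac)

lemma norm_powr_eq_inner_powr: "norm x powr q = (x \<bullet> x) powr (q/2)"
proof -
  have "norm x = (x \<bullet> x) powr (1/2)"
    by (simp add: norm_eq_sqrt_inner powr_half_sqrt)
  then show ?thesis by (simp add: powr_powr)
qed

lemma riesz_kernel_eq_inner:
  "riesz_kernel p x = (if p = 2 then ln (x \<bullet> x) / 2 else - (1 / (p - 2)) * (x \<bullet> x) powr ((2 - p)/2))"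
proof -
  have "ln (norm x) = ln (x \<bullet> x) / 2"
    by (cases "x = 0") (simp_all add: norm_eq_sqrt_inner ln_sqrt)
  then show ?thesis by (simp add: riesz_kernel_def norm_powr_eq_inner_powr)
qed

lemma has_derivative_riesz_kernel:
  assumes "x \<noteq> 0"
  shows "(riesz_kernel p has_derivative (\<lambda>h. riesz_grad p x \<bullet> h)) (at x)"
proof -
  have N: "x \<bullet> x > 0" using assms by simp
  show ?thesis
  proof (cases "p = 2")
    case True
    have "((\<lambda>y. ln (y \<bullet> y) / 2) has_derivative (\<lambda>h. riesz_grad p x \<bullet> h)) (at x)"
      using N True
      by (auto intro!: derivative_eq_intros simp: riesz_grad_def powr_minus field_simps inner_commute)
    then show ?thesis using True by (simp add: riesz_kernel_eq_inner[abs_def])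
  next
    case False
    have "(2 - p)/2 = -p/2 + 1" by simp
    then have "(x \<bullet> x) powr ((2 - p)/2) = (x \<bullet> x) powr (-p/2) * (x \<bullet> x)"
      using N by (simp only: powr_add powr_one)
    then have "((\<lambda>y. - (1 / (p - 2)) * (y \<bullet> y) powr ((2 - p)/2)) has_derivative
        (\<lambda>h. riesz_grad p x \<bullet> h)) (at x)"
      using N False
      by (auto intro!: derivative_eq_intros ext simp: riesz_grad_def inner_commute) (simp add: field_simps)
    then show ?thesis using False by (simp add: riesz_kernel_eq_inner[abs_def])
  qed
qed

lemma has_derivative_riesz_grad:
  assumes "x \<noteq> 0"
  shows "(riesz_grad p has_derivative (\<lambda>h. riesz_hess p x *v h)) (at x)"
proof -
  have "x \<bullet> x > 0" using assms by simp
  then have "((\<lambda>y. (y \<bullet> y) powr (-p/2) *\<^sub>R y) has_derivative (\<lambda>h. riesz_hess p x *v h)) (at x)"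
    by (auto intro!: derivative_eq_intros ext
        simp: riesz_hess_def proj_line_mult_vector algebra_simps scaleR_matrix_vector_assoc[symmetric] inner_commute)
  then show ?thesis by (simp add: riesz_grad_def[abs_def])
qed

lemma continuous_on_riesz_hess: "continuous_on (- {0}) (riesz_hess p :: real^'n \<Rightarrow> real^'n^'n)"
  unfolding riesz_hess_def[abs_def] proj_line_def
  by (intro continuous_intros) auto

lemma C2_test_at_riesz_kernel:
  fixes y :: "real^'n"
  assumes "y \<noteq> 0"
  shows "C2_test_at (riesz_kernel p) y (riesz_hess p y)"
  unfolding C2_test_at_iff
proof (intro exI conjI)
  have sub: "ball y (norm y) \<subseteq> - {0}" by (auto simp: dist_norm)
  then show "has_grad_hess_on (riesz_kernel p) (riesz_grad p) (riesz_hess p) (ball y (norm y))"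
    unfolding has_grad_hess_on_def using has_derivative_riesz_kernel has_derivative_riesz_grad by blast
  show "continuous_on (ball y (norm y)) (riesz_hess p)"
    using continuous_on_riesz_hess sub by (rule continuous_on_subset)
qed (use assms in auto)

lemma riesz_hess_scaleR:
  assumes "c > 0"
  shows "riesz_hess p (c *\<^sub>R x) = c powr (-p) *\<^sub>R riesz_hess p x"
proof -
  have "proj_line (c *\<^sub>R x) = c\<^sup>2 *\<^sub>R proj_line x"
    by (simp add: proj_line_def vec_eq_iff power2_eq_square)
  moreover have "(c * (c * (x \<bullet> x))) powr (-p/2) = c powr (-p) * (x \<bullet> x) powr (-p/2)"
  proof -
    have "(c\<^sup>2) powr (-p/2) = (c powr 2) powr (-p/2)"
      using assms by (simp add: powr_numeral)
    also have "\<dots> = c powr (-p)" by (simp add: powr_powr)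
    finally have "(c\<^sup>2) powr (-p/2) = c powr (-p)" .
    then show ?thesis by (simp add: powr_mult power2_eq_square mult.assoc[symmetric])
  qed
  ultimately show ?thesis
    using assms by (cases "x = 0") (auto simp: riesz_hess_def power2_eq_square)
qed

lemma riesz_hess_unit:
  assumes "norm e = 1"
  shows "riesz_hess p e = proj_perp e - (p - 1) *\<^sub>R proj_line e"
proof -
  have "e \<bullet> e = 1" using assms by (simp add: norm_eq_1)
  then show ?thesis by (simp add: riesz_hess_def proj_perp_def algebra_simps)
qed

lemma riesz_hess_eq_sgn:
  fixes y :: "real^'n"
  assumes "y \<noteq> 0"
  shows "riesz_hess p y = norm y powr (-p) *\<^sub>R riesz_hess p (sgn y)"
  using riesz_hess_scaleR[of "norm y" p "sgn y"] assms by (simp add: sgn_div_norm)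

lemma cone_subequation_riesz_hess_frontier_iff_unit:
  assumes "cone_subequation F"
  shows "(\<forall>y\<in>- {0}. riesz_hess p y \<in> top_of_set Sym frontier_of F) \<longleftrightarrow>
    (\<forall>e::real^'n. norm e = 1 \<longrightarrow> riesz_hess p e \<in> top_of_set Sym frontier_of F)"
proof
  assume "\<forall>y\<in>- {0}. riesz_hess p y \<in> top_of_set Sym frontier_of F"
  then show "\<forall>e::real^'n. norm e = 1 \<longrightarrow> riesz_hess p e \<in> top_of_set Sym frontier_of F"
    by auto
next
  assume unit: "\<forall>e::real^'n. norm e = 1 \<longrightarrow> riesz_hess p e \<in> top_of_set Sym frontier_of F"
  show "\<forall>y\<in>- {0}. riesz_hess p y \<in> top_of_set Sym frontier_of F"
  proof
    fix y :: "real^'n" assume "y \<in> - {0}"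
    then have "y \<noteq> 0" by simp
    then have "riesz_hess p (sgn y) \<in> top_of_set Sym frontier_of F"
      using unit by (simp add: norm_sgn)
    then show "riesz_hess p y \<in> top_of_set Sym frontier_of F"
      using riesz_hess_eq_sgn[OF \<open>y \<noteq> 0\<close>] \<open>y \<noteq> 0\<close>
        cone_subequation_frontier_scaleR_iff[OF assms, of "norm y powr (-p)"]
      by simp
  qed
qed

theorem proposition3p1:
  fixes F :: "(real^'n^'n) set" and p :: real
  assumes "cone_subequation F" and "p \<ge> 1"
  shows "harmonic_on F (- {0}) (riesz_kernel p) \<longleftrightarrow>
    (\<forall>e::real^'n. norm e = 1 \<longrightarrow>
       proj_perp e - (p - 1) *\<^sub>R proj_line e \<in> (top_of_set Sym) frontier_of F)"
proof -
  have "harmonic_on F (- {0}) (riesz_kernel p) \<longleftrightarrow>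
      (\<forall>y\<in>- {0}. riesz_hess p y \<in> top_of_set Sym frontier_of F)"
    using assms(1) C2_test_at_riesz_kernel by (intro harmonic_on_iff_hessian_in_frontier) auto
  also have "\<dots> \<longleftrightarrow> (\<forall>e::real^'n. norm e = 1 \<longrightarrow> riesz_hess p e \<in> top_of_set Sym frontier_of F)"
    using assms(1) by (rule cone_subequation_riesz_hess_frontier_iff_unit)
  also have "\<dots> \<longleftrightarrow> (\<forall>e::real^'n. norm e = 1 \<longrightarrow>
       proj_perp e - (p - 1) *\<^sub>R proj_line e \<in> top_of_set Sym frontier_of F)"
    by (simp add: riesz_hess_unit)
  finally show ?thesis .
qed

end
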